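(* Let $k\ge 1$ and let $t_1\ge s_1\ge t_2\ge s_2\ge\cdots\ge t_k\ge s_k\ge 0=:t_{k+1}$ be integers. Let $\tilde A+\lambda\tilde E$ be a complex matrix pencil partitioned into $k$ block rows of sizes $s_1,\dots,s_k$ and $k$ block columns of sizes $t_1,\dots,t_k$, of the form \[ \tilde A+\lambda\tilde E=\begin{bmatrix} 0 & A_{1,2} & \cdots & A_{1,k}\\ & \ddots & \ddots & \vdots\\ & & \ddots & A_{k-1,k}\\ & & & 0\end{bmatrix}+\lambda\begin{bmatrix} E_{1,1} & E_{1,2} & \cdots & E_{1,k}\\ & \ddots & \ddots & \vdots\\ & & \ddots & E_{k-1,k}\\ & & & E_{k,k}\end{bmatrix}, \] where $A_{i,j},E_{i,j}\in\mathbb{C}^{s_i\times t_j}$, all blocks below the block diagonal (for both matrices) and the block-diagonal blocks of $\tilde A$ are zero, and the "stairs" have the special form \[ A_{i,i+1}=\begin{bmatrix}\hat A_{i,i+1}\\ 0\end{bmatrix},\qquad E_{i,i}=\begin{bmatrix}0 & \hat E_{i,i}\end{bmatrix}, \] with $\hat A_{i,i+1}\in\mathbb{C}^{t_{i+1}\times t_{i+1}}$ and $\hat E_{i,i}\in\mathbb{C}^{s_i\times s_i}$ upper triangular and invertible. Then there exist unit upper triangular (invertible) matrices $S$ and $T$ such that \[ S^{-1}(\tilde A+\lambda\tilde E)T=\begin{bmatrix}\lambda E_{1,1} & A_{1,2} & 0 & 0\\ & \ddots & \ddots & 0\\ & & \ddots & A_{k-1,k}\\ & & & \lambda E_{k,k}\end{bmatrix},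 \] i.e. all blocks other than the blocks $E_{i,i}$ (in the $\lambda$-coefficient) and $A_{i,i+1}$ (in the constant coefficient) are eliminated, while the blocks $E_{i,i}$ and $A_{i,i+1}$ themselves are left unaltered; so the transformed pencil is block bidiagonal.
   Context: A matrix is unit upper triangular if it is upper triangular with all diagonal entries equal to $1$. The block partition of the transformed pencil is the same as that of $\tilde A+\lambda\tilde E$. *)

theory Defs
  imports "Jordan_Normal_Form.Matrix"
begin

definition boff :: "(nat \<Rightarrow> nat) \<Rightarrow> nat \<Rightarrow> nat" where
  "boff sz i = (\<Sum>l<i. sz l)"

definition subblock :: "'a mat \<Rightarrow> nat \<Rightarrow> nat \<Rightarrow> nat \<Rightarrow> nat \<Rightarrow> 'a mat" where
  "subblock M r0 c0 nr nc = mat nr nc (\<lambda>(p, q). M $$ (r0 + p, c0 + q))"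

definition unit_upper_triangular :: "'a::{zero,one} mat \<Rightarrow> bool" where
  "unit_upper_triangular M \<longleftrightarrow> square_mat M \<and> upper_triangular M \<and>
     (\<forall>i < dim_row M. M $$ (i, i) = 1)"

end

theory Submission
  imports Defs "Jordan_Normal_Form.Determinant" "Jordan_Normal_Form.Column_Operations"
begin

text \<open>The unwanted entries are removed one at a time by elementary operations that are unit upper
  triangular.  An entry of A in block column j, right of the stair, is killed by adding a multiple
  of a row of block row j - 1 to its row: the diagonal of the triangular part of A_{j-1,j} supplies
  a row whose first nonzero entry lies exactly in that column.  An entry of E right of E_{i,i} is
  killed by adding a multiple of a column of block column i to its column: the diagonal of the
  triangular part of E_{i,i} supplies a column whose last nonzero entry lies exactly in that row.
  If the rows are processed from the bottom up, and within a row first the entries of A and then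
  those of E, each from left to right, then no operation destroys a zero created earlier or alters
  the blocks E_{i,i} and A_{i,i+1}.\<close>

lemma mult_add_less_mult_add_iff:
  fixes a b u v K :: nat
  assumes "u < K" and "v < K"
  shows "a * K + u < b * K + v \<longleftrightarrow> a < b \<or> (a = b \<and> u < v)"
proof -
  have less: "a * K + u < b * K + v" if "a < b" "u < K" for a b u v :: nat
  proof -
    have "a * K + u < Suc a * K" using \<open>u < K\<close> by simp
    also have "\<dots> \<le> b * K" using mult_le_mono1[OF Suc_leI[OF \<open>a < b\<close>]] .
    finally show ?thesis by simp
  qed
  show ?thesis
    using less[of a b u v] less[of b a v u] assms by (cases a b rule: linorder_cases) auto
qed

lemma upper_triangular_invertible_diag_nonzero:
  fixes X :: "'a::idom mat"
  assumes X: "X \<in> carrier_mat n n" and "upper_triangular X" "invertible_mat X" "p < n"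
  shows "X $$ (p, p) \<noteq> 0"
proof -
  obtain Y where XY: "X * Y = 1\<^sub>m n" and YX: "Y * X = 1\<^sub>m (dim_row Y)"
    using X \<open>invertible_mat X\<close> unfolding invertible_mat_def inverts_mat_def by auto
  have Y: "Y \<in> carrier_mat n n"
    using XY YX X by (metis carrier_matD carrier_matI index_mult_mat(2,3) index_one_mat(2,3))
  have "det X * det Y = 1" using det_mult[OF X Y] XY by simp
  then have "0 \<notin> set (diag_mat X)"
    using upper_triangular_imp_det_eq_0_iff[OF X \<open>upper_triangular X\<close>] by auto
  then show ?thesis using X \<open>p < n\<close> by (auto simp: diag_mat_def)
qed

lemma unit_upper_triangular_one: "unit_upper_triangular (1\<^sub>m n)"
  unfolding unit_upper_triangular_def by auto

lemma unit_upper_triangular_addrow_mat: "k < l \<Longrightarrow> unit_upper_triangular (addrow_mat n a k l)"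
  unfolding unit_upper_triangular_def upper_triangular_def by auto

lemma unit_upper_triangular_mult:
  fixes S T :: "'a::semiring_1 mat"
  assumes S: "S \<in> carrier_mat n n" and T: "T \<in> carrier_mat n n"
    and "unit_upper_triangular S" and "unit_upper_triangular T"
  shows "unit_upper_triangular (S * T)"
proof -
  have nonzero_term: "i \<le> l \<and> l \<le> j" if "S $$ (i, l) * T $$ (l, j) \<noteq> 0" "i < n" "l < n" for i j l
    using that assms(3,4) S T unfolding unit_upper_triangular_def
    by (metis carrier_matD(1) linorder_not_le mult_not_zero upper_triangularD)
  have entry: "(S * T) $$ (i, j) = (\<Sum>l\<in>{0..<n}. S $$ (i, l) * T $$ (l, j))"
    if "i < n" "j < n" for i j
    using that S T by (auto simp: scalar_prod_def intro!: sum.cong)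
  have lower: "(S * T) $$ (i, j) = 0" if "j < i" "i < n" for i j
    unfolding entry[OF that(2) less_trans[OF that]]
    using nonzero_term that by (intro sum.neutral) force
  have diag: "(S * T) $$ (i, i) = 1" if "i < n" for i
  proof -
    have "(S * T) $$ (i, i) = (\<Sum>l\<in>{i}. S $$ (i, l) * T $$ (l, i))"
      unfolding entry[OF that that] using nonzero_term that
      by (intro sum.mono_neutral_right) fastforce+
    then show ?thesis using assms(3,4) S T that unfolding unit_upper_triangular_def by simp
  qed
  show ?thesis
    unfolding unit_upper_triangular_def using S T lower diag by auto
qed

lemma mult_pencil_distrib:
  fixes A E :: "'a::comm_ring_1 mat"
  assumes Sinv: "Sinv \<in> carrier_mat n n" and A: "A \<in> carrier_mat n m" and E: "E \<in> carrier_mat n m"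
    and T: "T \<in> carrier_mat m m"
  shows "Sinv * (A + lam \<cdot>\<^sub>m E) * T = Sinv * A * T + lam \<cdot>\<^sub>m (Sinv * E * T)"
proof -
  have "Sinv * (A + lam \<cdot>\<^sub>m E) * T = (Sinv * A + lam \<cdot>\<^sub>m (Sinv * E)) * T"
    using Sinv A E by (simp add: mult_add_distrib_mat[of _ n n] mult_smult_distrib[of _ n n])
  also have "\<dots> = Sinv * A * T + lam \<cdot>\<^sub>m (Sinv * E * T)"
    using Sinv A E T by (simp add: add_mult_distrib_mat[of _ n m] mult_smult_assoc_mat[of _ n m])
  finally show ?thesis .
qed

definition unitriangular_strict_equiv :: "'a::comm_ring_1 mat \<Rightarrow> 'a mat \<Rightarrow> 'a mat \<Rightarrow> 'a mat \<Rightarrow> bool"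
  where "unitriangular_strict_equiv A E A' E' \<longleftrightarrow>
    (\<exists>S Sinv T. S \<in> carrier_mat (dim_row A) (dim_row A) \<and> Sinv \<in> carrier_mat (dim_row A) (dim_row A) \<and>
       T \<in> carrier_mat (dim_col A) (dim_col A) \<and>
       unit_upper_triangular S \<and> unit_upper_triangular T \<and>
       Sinv * S = 1\<^sub>m (dim_row A) \<and> S * Sinv = 1\<^sub>m (dim_row A) \<and>
       A' = Sinv * A * T \<and> E' = Sinv * E * T)"

lemma unitriangular_strict_equiv_refl:
  assumes "A \<in> carrier_mat n m" and "E \<in> carrier_mat n m"
  shows "unitriangular_strict_equiv A E A E"
  unfolding unitriangular_strict_equiv_def
  by (rule exI[of _ "1\<^sub>m n"], rule exI[of _ "1\<^sub>m n"], rule exI[of _ "1\<^sub>m m"])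
    (use assms in \<open>auto simp: unit_upper_triangular_one\<close>)

lemma unitriangular_strict_equiv_carrier:
  assumes "unitriangular_strict_equiv A E A' E'" and "A \<in> carrier_mat n m" and "E \<in> carrier_mat n m"
  shows "A' \<in> carrier_mat n m" and "E' \<in> carrier_mat n m"
  using assms unfolding unitriangular_strict_equiv_def by auto

lemma unitriangular_strict_equiv_addrow:
  fixes A E :: "'a::comm_ring_1 mat"
  assumes equiv: "unitriangular_strict_equiv A E A' E'"
    and A: "A \<in> carrier_mat n m" and E: "E \<in> carrier_mat n m" and "k < l" "l < n"
  shows "unitriangular_strict_equiv A E (addrow a k l A') (addrow a k l E')"
proof -
  obtain S Sinv T where S: "S \<in> carrier_mat n n" and Sinv: "Sinv \<in> carrier_mat n n"
    and T: "T \<in> carrier_mat m m" and uS: "unit_upper_triangular S" and uT: "unit_upper_triangular T"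
    and inv: "Sinv * S = 1\<^sub>m n" "S * Sinv = 1\<^sub>m n"
    and A': "A' = Sinv * A * T" and E': "E' = Sinv * E * T"
    using equiv A unfolding unitriangular_strict_equiv_def by auto
  define P where "P = addrow_mat n a k l"
  define Q where "Q = addrow_mat n (- a) k l"
  have P: "P \<in> carrier_mat n n" and Q: "Q \<in> carrier_mat n n" unfolding P_def Q_def by auto
  have uQ: "unit_upper_triangular Q"
    unfolding Q_def using \<open>k < l\<close> by (rule unit_upper_triangular_addrow_mat)
  have PQ: "P * Q = 1\<^sub>m n" and QP: "Q * P = 1\<^sub>m n"
    unfolding P_def Q_def using addrow_mat_inv[of k n l a] addrow_mat_inv[of k n l "- a"] assms(4,5)
    by auto
  have "(P * Sinv) * (S * Q) = P * ((Sinv * S) * Q)"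
    using P Sinv S Q by (simp add: assoc_mult_mat[of _ n n _ n _ n])
  then have left_inv: "(P * Sinv) * (S * Q) = 1\<^sub>m n" using inv PQ Q by simp
  have "(S * Q) * (P * Sinv) = S * ((Q * P) * Sinv)"
    using P Sinv S Q by (simp add: assoc_mult_mat[of _ n n _ n _ n])
  then have right_inv: "(S * Q) * (P * Sinv) = 1\<^sub>m n" using inv QP Sinv by simp
  have addrow_eq: "addrow a k l (Sinv * X * T) = (P * Sinv) * X * T" if "X \<in> carrier_mat n m" for X
  proof -
    have "addrow a k l (Sinv * X * T) = P * (Sinv * X * T)"
      unfolding P_def using that Sinv T \<open>l < n\<close> by (intro addrow_mat) auto
    then show ?thesis
      using assoc_mult_mat[OF Sinv that T] assoc_mult_mat[OF mult_carrier_mat[OF P Sinv] that T]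
        assoc_mult_mat[OF P Sinv mult_carrier_mat[OF that T]]
      by simp
  qed
  have "dim_row A = n" "dim_col A = m" using A by auto
  then show ?thesis
    unfolding unitriangular_strict_equiv_def A' E'
    using mult_carrier_mat[OF S Q] mult_carrier_mat[OF P Sinv] T uT left_inv right_inv
      unit_upper_triangular_mult[OF S Q uS uQ] addrow_eq[OF A] addrow_eq[OF E]
    by blast
qed

lemma unitriangular_strict_equiv_addcol:
  fixes A E :: "'a::comm_ring_1 mat"
  assumes equiv: "unitriangular_strict_equiv A E A' E'"
    and A: "A \<in> carrier_mat n m" and E: "E \<in> carrier_mat n m" and "l < k" "k < m"
  shows "unitriangular_strict_equiv A E (addcol a k l A') (addcol a k l E')"
proof -
  obtain S Sinv T where S: "S \<in> carrier_mat n n" and Sinv: "Sinv \<in> carrier_mat n n"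
    and T: "T \<in> carrier_mat m m" and uS: "unit_upper_triangular S" and uT: "unit_upper_triangular T"
    and inv: "Sinv * S = 1\<^sub>m n" "S * Sinv = 1\<^sub>m n"
    and A': "A' = Sinv * A * T" and E': "E' = Sinv * E * T"
    using equiv A unfolding unitriangular_strict_equiv_def by auto
  define R where "R = addrow_mat m a l k"
  have R: "R \<in> carrier_mat m m" unfolding R_def by auto
  have uR: "unit_upper_triangular R"
    unfolding R_def using \<open>l < k\<close> by (rule unit_upper_triangular_addrow_mat)
  have addcol_eq: "addcol a k l (Sinv * X * T) = Sinv * X * (T * R)" if "X \<in> carrier_mat n m" for X
  proof -
    have "addcol a k l (Sinv * X * T) = Sinv * X * T * R"
      unfolding R_def using that Sinv T \<open>l < k\<close> \<open>k < m\<close> by (intro addcol_mat) auto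
    then show ?thesis using assoc_mult_mat[OF mult_carrier_mat[OF Sinv that] T R] by simp
  qed
  have "dim_row A = n" "dim_col A = m" using A by auto
  then show ?thesis
    unfolding unitriangular_strict_equiv_def A' E'
    using S Sinv mult_carrier_mat[OF T R] uS inv unit_upper_triangular_mult[OF T R uT uR]
      addcol_eq[OF A] addcol_eq[OF E]
    by blast
qed

text \<open>Rows and columns are indexed globally; rblock x and cblock y are the block row of row x and the
  block column of column y.  The staircase enters only through the pivots.\<close>
locale staircase_pencil =
  fixes N M :: nat and rblock cblock :: "nat \<Rightarrow> nat" and A E :: "'a::field mat"
  assumes A_carrier: "A \<in> carrier_mat N M" and E_carrier: "E \<in> carrier_mat N M"
    and rblock_mono: "mono_on {..<N} rblock" and cblock_mono: "mono_on {..<M} cblock"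
    and A_lower: "\<And>x y. x < N \<Longrightarrow> y < M \<Longrightarrow> cblock y \<le> rblock x \<Longrightarrow> A $$ (x, y) = 0"
    and E_lower: "\<And>x y. x < N \<Longrightarrow> y < M \<Longrightarrow> cblock y < rblock x \<Longrightarrow> E $$ (x, y) = 0"
    and A_pivot_row: "\<And>y. y < M \<Longrightarrow> 0 < cblock y \<Longrightarrow>
      \<exists>\<rho><N. rblock \<rho> + 1 = cblock y \<and> A $$ (\<rho>, y) \<noteq> 0 \<and> (\<forall>y'<y. A $$ (\<rho>, y') = 0)"
    and E_pivot_column: "\<And>x. x < N \<Longrightarrow>
      \<exists>c<M. cblock c = rblock x \<and> E $$ (x, c) \<noteq> 0 \<and> (\<forall>x'<N. x < x' \<longrightarrow> E $$ (x', c) = 0)"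
begin

lemma rblock_less_imp_less: "x < N \<Longrightarrow> x' < N \<Longrightarrow> rblock x < rblock x' \<Longrightarrow> x < x'"
  using rblock_mono by (metis lessThan_iff linorder_not_le mono_onD)

lemma cblock_less_imp_less: "y < M \<Longrightarrow> y' < M \<Longrightarrow> cblock y < cblock y' \<Longrightarrow> y < y'"
  using cblock_mono by (metis lessThan_iff linorder_not_le mono_onD)

text \<open>elim_rank x e y is the position of entry (x, y) of A (e = 0) or of E (e = 1) in the order of
  elimination: rows from the bottom up, in each row A before E, columns from left to right.\<close>
definition elim_rank :: "nat \<Rightarrow> nat \<Rightarrow> nat \<Rightarrow> nat" where
  "elim_rank x e y = ((N - x) * 2 + e) * M + y"

lemma elim_rank_less_iff:
  assumes "x < N" "x' < N" "y < M" "y' < M" "e < 2" "e' < 2"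
  shows "elim_rank x e y < elim_rank x' e' y' \<longleftrightarrow> x' < x \<or> (x = x' \<and> (e < e' \<or> (e = e' \<and> y < y')))"
  unfolding elim_rank_def using assms by (auto simp: mult_add_less_mult_add_iff)

lemma elim_rank_le_iff:
  assumes "x < N" "x' < N" "y < M" "y' < M" "e < 2" "e' < 2"
  shows "elim_rank x e y \<le> elim_rank x' e' y' \<longleftrightarrow> x' < x \<or> (x = x' \<and> (e < e' \<or> (e = e' \<and> y \<le> y')))"
  using elim_rank_less_iff[of x' x y' y e' e] assms by (auto simp: not_less[symmetric])

lemma elim_rank_less_bound: "x < N \<Longrightarrow> e < 2 \<Longrightarrow> y < M \<Longrightarrow> elim_rank x e y < (2 * N + 2) * M"
  using mult_add_less_mult_add_iff[of y M 0 "(N - x) * 2 + e" "2 * N + 2"]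
  unfolding elim_rank_def by simp

definition reduced_upto :: "nat \<Rightarrow> 'a mat \<Rightarrow> 'a mat \<Rightarrow> bool" where
  "reduced_upto m A' E' \<longleftrightarrow> unitriangular_strict_equiv A E A' E' \<and>
    (\<forall>x<N. \<forall>y<M.
      (cblock y \<le> rblock x + 1 \<longrightarrow> A' $$ (x, y) = A $$ (x, y)) \<and>
      (cblock y \<le> rblock x \<longrightarrow> E' $$ (x, y) = E $$ (x, y)) \<and>
      (rblock x + 1 < cblock y \<longrightarrow> elim_rank x 0 y < m \<longrightarrow> A' $$ (x, y) = 0) \<and>
      (rblock x < cblock y \<longrightarrow> elim_rank x 1 y < m \<longrightarrow> E' $$ (x, y) = 0))"

lemma reduced_uptoD:
  assumes "reduced_upto m A' E'"
  shows "unitriangular_strict_equiv A E A' E'"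
    and "x < N \<Longrightarrow> y < M \<Longrightarrow> cblock y \<le> rblock x + 1 \<Longrightarrow> A' $$ (x, y) = A $$ (x, y)"
    and "x < N \<Longrightarrow> y < M \<Longrightarrow> cblock y \<le> rblock x \<Longrightarrow> E' $$ (x, y) = E $$ (x, y)"
    and "x < N \<Longrightarrow> y < M \<Longrightarrow> rblock x + 1 < cblock y \<Longrightarrow> elim_rank x 0 y < m \<Longrightarrow>
      A' $$ (x, y) = 0"
    and "x < N \<Longrightarrow> y < M \<Longrightarrow> rblock x < cblock y \<Longrightarrow> elim_rank x 1 y < m \<Longrightarrow>
      E' $$ (x, y) = 0"
  using assms unfolding reduced_upto_def by blast+

lemma reduced_upto_0: "reduced_upto 0 A E"
  unfolding reduced_upto_def using unitriangular_strict_equiv_refl[OF A_carrier E_carrier] by simp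

lemma reduced_upto_Suc_by_row_operation:
  assumes red: "reduced_upto m A' E'" and r: "r < N" and c: "c < M"
    and target: "rblock r + 1 < cblock c" and m: "m = elim_rank r 0 c"
  shows "\<exists>A'' E''. reduced_upto (Suc m) A'' E''"
proof -
  obtain \<rho> where \<rho>: "\<rho> < N" "rblock \<rho> + 1 = cblock c" and pivot: "A $$ (\<rho>, c) \<noteq> 0"
    and left_of_pivot: "\<And>y. y < c \<Longrightarrow> A $$ (\<rho>, y) = 0"
    using A_pivot_row[OF c] target by auto
  have "r < \<rho>" using rblock_less_imp_less[OF r \<rho>(1)] target \<rho>(2) by simp
  note equiv = reduced_uptoD(1)[OF red]
  note A'_keep = reduced_uptoD(2)[OF red] and E'_keep = reduced_uptoD(3)[OF red]
    and A'_zero = reduced_uptoD(4)[OF red] and E'_zero = reduced_uptoD(5)[OF red]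
  have A': "A' \<in> carrier_mat N M" and E': "E' \<in> carrier_mat N M"
    using unitriangular_strict_equiv_carrier[OF equiv A_carrier E_carrier] by auto
  have A'_\<rho>: "A' $$ (\<rho>, y) = A $$ (\<rho>, y)" if "y \<le> c" for y
    using A'_keep[OF \<rho>(1)] that c \<rho>(2) cblock_less_imp_less[of c y] by fastforce
  have E'_\<rho>: "E' $$ (\<rho>, y) = 0" if "y < M" "cblock y \<le> rblock r" for y
    using E'_keep[OF \<rho>(1) that(1)] E_lower[OF \<rho>(1) that(1)] that(2) target \<rho>(2) by simp
  define \<beta> where "\<beta> = - A' $$ (r, c) / A $$ (\<rho>, c)"
  have "reduced_upto (Suc m) (addrow \<beta> r \<rho> A') (addrow \<beta> r \<rho> E')"
    unfolding reduced_upto_def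
  proof (intro conjI allI impI)
    show "unitriangular_strict_equiv A E (addrow \<beta> r \<rho> A') (addrow \<beta> r \<rho> E')"
      using unitriangular_strict_equiv_addrow[OF equiv A_carrier E_carrier \<open>r < \<rho>\<close> \<rho>(1)] .
    fix x y assume x: "x < N" and y: "y < M"
    have A'': "addrow \<beta> r \<rho> A' $$ (x, y) =
        (if x = r then \<beta> * A' $$ (\<rho>, y) + A' $$ (x, y) else A' $$ (x, y))"
      and E'': "addrow \<beta> r \<rho> E' $$ (x, y) =
        (if x = r then \<beta> * E' $$ (\<rho>, y) + E' $$ (x, y) else E' $$ (x, y))"
      using A' E' x y by auto
    have rank_A: "elim_rank x 0 y < Suc m \<longleftrightarrow> r < x \<or> (x = r \<and> y \<le> c)"
      "elim_rank x 0 y < m \<longleftrightarrow> r < x \<or> (x = r \<and> y < c)"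
      unfolding m less_Suc_eq_le using elim_rank_le_iff elim_rank_less_iff x y r c by auto
    have rank_E: "elim_rank x 1 y < Suc m \<longleftrightarrow> r < x" "elim_rank x 1 y < m \<longleftrightarrow> r < x"
      unfolding m less_Suc_eq_le using elim_rank_le_iff elim_rank_less_iff x y r c by auto
    show "addrow \<beta> r \<rho> A' $$ (x, y) = A $$ (x, y)" if "cblock y \<le> rblock x + 1"
    proof -
      have "x = r \<Longrightarrow> y < c" using cblock_less_imp_less[OF y c] that target by simp
      then show ?thesis using A'' A'_keep[OF x y that] A'_\<rho> left_of_pivot by auto
    qed
    show "addrow \<beta> r \<rho> E' $$ (x, y) = E $$ (x, y)" if "cblock y \<le> rblock x"
      using E'' E'_keep[OF x y that] E'_\<rho>[OF y] that by auto
    show "addrow \<beta> r \<rho> A' $$ (x, y) = 0" if "rblock x + 1 < cblock y" "elim_rank x 0 y < Suc m"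
    proof (cases "x = r \<and> y = c")
      case True
      then show ?thesis using A'' A'_\<rho>[of c] pivot unfolding \<beta>_def by simp
    next
      case False
      then show ?thesis
        using that A'' A'_zero[OF x y] A'_\<rho> left_of_pivot rank_A by auto
    qed
    show "addrow \<beta> r \<rho> E' $$ (x, y) = 0" if "rblock x < cblock y" "elim_rank x 1 y < Suc m"
      using that E'' E'_zero[OF x y] rank_E by auto
  qed
  then show ?thesis by blast
qed

lemma reduced_upto_Suc_by_column_operation:
  assumes red: "reduced_upto m A' E'" and r: "r < N" and c: "c < M"
    and target: "rblock r < cblock c" and m: "m = elim_rank r 1 c"
  shows "\<exists>A'' E''. reduced_upto (Suc m) A'' E''"
proof -
  obtain c\<^sub>0 where c\<^sub>0: "c\<^sub>0 < M" "cblock c\<^sub>0 = rblock r" and pivot: "E $$ (r, c\<^sub>0) \<noteq> 0"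
    and below_pivot: "\<And>x. x < N \<Longrightarrow> r < x \<Longrightarrow> E $$ (x, c\<^sub>0) = 0"
    using E_pivot_column[OF r] by auto
  have "c\<^sub>0 < c" using cblock_less_imp_less[OF c\<^sub>0(1) c] target c\<^sub>0(2) by simp
  note equiv = reduced_uptoD(1)[OF red]
  note A'_keep = reduced_uptoD(2)[OF red] and E'_keep = reduced_uptoD(3)[OF red]
    and A'_zero = reduced_uptoD(4)[OF red] and E'_zero = reduced_uptoD(5)[OF red]
  have A': "A' \<in> carrier_mat N M" and E': "E' \<in> carrier_mat N M"
    using unitriangular_strict_equiv_carrier[OF equiv A_carrier E_carrier] by auto
  have A'_c\<^sub>0: "A' $$ (x, c\<^sub>0) = 0" if "x < N" "rblock r \<le> rblock x" for x
    using A'_keep[OF that(1) c\<^sub>0(1)] A_lower[OF that(1) c\<^sub>0(1)] that(2) c\<^sub>0(2) by simp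
  have E'_c\<^sub>0: "E' $$ (x, c\<^sub>0) = E $$ (x, c\<^sub>0)" if "x < N" "r \<le> x" for x
    using E'_keep[OF that(1) c\<^sub>0(1)] that rblock_less_imp_less[OF that(1) r] c\<^sub>0(2) by fastforce
  define \<alpha> where "\<alpha> = - E' $$ (r, c) / E $$ (r, c\<^sub>0)"
  have "reduced_upto (Suc m) (addcol \<alpha> c c\<^sub>0 A') (addcol \<alpha> c c\<^sub>0 E')"
    unfolding reduced_upto_def
  proof (intro conjI allI impI)
    show "unitriangular_strict_equiv A E (addcol \<alpha> c c\<^sub>0 A') (addcol \<alpha> c c\<^sub>0 E')"
      using unitriangular_strict_equiv_addcol[OF equiv A_carrier E_carrier \<open>c\<^sub>0 < c\<close> c] .
    fix x y assume x: "x < N" and y: "y < M"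
    have A'': "addcol \<alpha> c c\<^sub>0 A' $$ (x, y) =
        (if y = c then \<alpha> * A' $$ (x, c\<^sub>0) + A' $$ (x, y) else A' $$ (x, y))"
      and E'': "addcol \<alpha> c c\<^sub>0 E' $$ (x, y) =
        (if y = c then \<alpha> * E' $$ (x, c\<^sub>0) + E' $$ (x, y) else E' $$ (x, y))"
      using A' E' x y by auto
    have rank_A: "elim_rank x 0 y < Suc m \<longleftrightarrow> r \<le> x" "elim_rank x 0 y < m \<longleftrightarrow> r \<le> x"
      unfolding m less_Suc_eq_le using elim_rank_le_iff elim_rank_less_iff x y r c by auto
    have rank_E: "elim_rank x 1 y < Suc m \<longleftrightarrow> r < x \<or> (x = r \<and> y \<le> c)"
      "elim_rank x 1 y < m \<longleftrightarrow> r < x \<or> (x = r \<and> y < c)"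
      unfolding m less_Suc_eq_le using elim_rank_le_iff elim_rank_less_iff x y r c by auto
    have rblock_x: "rblock r \<le> rblock x" if "r \<le> x"
      using rblock_mono that x r by (auto intro: mono_onD)
    show "addcol \<alpha> c c\<^sub>0 A' $$ (x, y) = A $$ (x, y)" if "cblock y \<le> rblock x + 1"
      using A'' A'_keep[OF x y that] A'_c\<^sub>0[OF x] that target by auto
    show "addcol \<alpha> c c\<^sub>0 E' $$ (x, y) = E $$ (x, y)" if "cblock y \<le> rblock x"
    proof -
      have "y = c \<Longrightarrow> r < x" using rblock_less_imp_less[OF r x] that target by simp
      then show ?thesis using E'' E'_keep[OF x y that] E'_c\<^sub>0[OF x] below_pivot[OF x] by auto
    qed
    show "addcol \<alpha> c c\<^sub>0 A' $$ (x, y) = 0" if "rblock x + 1 < cblock y" "elim_rank x 0 y < Suc m"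
      using that A'' A'_zero[OF x y] A'_c\<^sub>0[OF x] rblock_x rank_A by auto
    show "addcol \<alpha> c c\<^sub>0 E' $$ (x, y) = 0" if "rblock x < cblock y" "elim_rank x 1 y < Suc m"
    proof (cases "x = r \<and> y = c")
      case True
      then show ?thesis using E'' E'_c\<^sub>0[of r] r pivot unfolding \<alpha>_def by simp
    next
      case False
      then show ?thesis
        using that E'' E'_zero[OF x y] E'_c\<^sub>0[OF x] below_pivot[OF x] rank_E by auto
    qed
  qed
  then show ?thesis by blast
qed

lemma reduced_upto_Suc:
  assumes red: "reduced_upto m A' E'"
  shows "\<exists>A'' E''. reduced_upto (Suc m) A'' E''"
proof (cases "\<exists>x<N. \<exists>y<M. rblock x + 1 < cblock y \<and> m = elim_rank x 0 y")
  case True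
  then show ?thesis using reduced_upto_Suc_by_row_operation[OF red] by blast
next
  case no_A_target: False
  show ?thesis
  proof (cases "\<exists>x<N. \<exists>y<M. rblock x < cblock y \<and> m = elim_rank x 1 y")
    case True
    then show ?thesis using reduced_upto_Suc_by_column_operation[OF red] by blast
  next
    case no_E_target: False
    have "reduced_upto (Suc m) A' E'"
      using red no_A_target no_E_target unfolding reduced_upto_def less_Suc_eq by blast
    then show ?thesis by blast
  qed
qed

lemma reduced_upto_exists: "\<exists>A' E'. reduced_upto m A' E'"
proof (induction m)
  case 0
  then show ?case using reduced_upto_0 by blast
next
  case (Suc m)
  then show ?case using reduced_upto_Suc by blast
qed

theorem bidiagonal_reduction:
  "\<exists>A' E'. unitriangular_strict_equiv A E A' E' \<and>
     (\<forall>x<N. \<forall>y<M. A' $$ (x, y) = (if cblock y = rblock x + 1 then A $$ (x, y) else 0) \<and>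
                   E' $$ (x, y) = (if cblock y = rblock x then E $$ (x, y) else 0))"
proof -
  obtain A' E' where red: "reduced_upto ((2 * N + 2) * M) A' E'"
    using reduced_upto_exists by blast
  have "A' $$ (x, y) = (if cblock y = rblock x + 1 then A $$ (x, y) else 0) \<and>
        E' $$ (x, y) = (if cblock y = rblock x then E $$ (x, y) else 0)" if "x < N" "y < M" for x y
    using reduced_uptoD(2-5)[OF red that] A_lower[OF that] E_lower[OF that]
      elim_rank_less_bound[OF that(1) _ that(2)]
    by (cases "cblock y \<le> rblock x + 1") auto
  then show ?thesis using reduced_uptoD(1)[OF red] by blast
qed

end

lemma boff_Suc: "boff sz (Suc i) = boff sz i + sz i"
  by (simp add: boff_def)

lemma boff_mono: "i \<le> j \<Longrightarrow> boff sz i \<le> boff sz j"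
  unfolding boff_def by (rule sum_mono2) auto

lemma boff_add_less: "i < k \<Longrightarrow> p < sz i \<Longrightarrow> boff sz i + p < boff sz k"
  using boff_mono[of "Suc i" k sz] by (simp add: boff_Suc)

lemma boff_decomp: "x < boff sz k \<Longrightarrow> \<exists>i<k. \<exists>p<sz i. x = boff sz i + p"
proof (induction k)
  case 0
  then show ?case by (simp add: boff_def)
next
  case (Suc k)
  show ?case
  proof (cases "x < boff sz k")
    case True
    then show ?thesis using Suc.IH by (meson less_SucI)
  next
    case False
    then have "x - boff sz k < sz k" "x = boff sz k + (x - boff sz k)"
      using Suc.prems by (auto simp: boff_Suc)
    then show ?thesis by blast
  qed
qed

definition block_index :: "(nat \<Rightarrow> nat) \<Rightarrow> nat \<Rightarrow> nat" where
  "block_index sz x = (LEAST i. x < boff sz (Suc i))"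

lemma block_index_boff: "p < sz i \<Longrightarrow> block_index sz (boff sz i + p) = i"
  unfolding block_index_def
proof (rule Least_equality)
  show "p < sz i \<Longrightarrow> boff sz i + p < boff sz (Suc i)" by (simp add: boff_Suc)
  show "i \<le> j" if "boff sz i + p < boff sz (Suc j)" for j
    using that boff_mono[of "Suc j" i sz] by (cases "j < i") auto
qed

lemma mono_on_block_index: "mono_on {..<boff sz k} (block_index sz)"
proof (rule mono_onI)
  fix x x' assume "x' \<in> {..<boff sz k}" and "x \<le> x'"
  then obtain i p where ip: "p < sz i" "x' = boff sz i + p" using boff_decomp by blast
  then have "x < boff sz (Suc i)" using \<open>x \<le> x'\<close> by (simp add: boff_Suc)
  then have "block_index sz x \<le> i" unfolding block_index_def by (rule Least_le)
  then show "block_index sz x \<le> block_index sz x'" using block_index_boff[of p sz i] ip by simp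
qed

locale staircase_blocks =
  fixes k :: nat and s t :: "nat \<Rightarrow> nat" and A E :: "'a::field mat"
  assumes ts: "\<forall>i<k. s i \<le> t i"
    and st: "\<forall>i. i + 1 < k \<longrightarrow> t (i + 1) \<le> s i"
    and A_dim: "A \<in> carrier_mat (boff s k) (boff t k)"
    and E_dim: "E \<in> carrier_mat (boff s k) (boff t k)"
    and A_lower: "\<forall>i<k. \<forall>j<k. \<forall>p<s i. \<forall>q<t j. j \<le> i \<longrightarrow>
                    A $$ (boff s i + p, boff t j + q) = 0"
    and E_lower: "\<forall>i<k. \<forall>j<k. \<forall>p<s i. \<forall>q<t j. j < i \<longrightarrow>
                    E $$ (boff s i + p, boff t j + q) = 0"
    and A_stair_hat: "\<forall>i. i + 1 < k \<longrightarrow>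
          upper_triangular (subblock A (boff s i) (boff t (i + 1)) (t (i + 1)) (t (i + 1))) \<and>
          invertible_mat (subblock A (boff s i) (boff t (i + 1)) (t (i + 1)) (t (i + 1)))"
    and E_stair_hat: "\<forall>i<k.
          upper_triangular (subblock E (boff s i) (boff t i + (t i - s i)) (s i) (s i)) \<and>
          invertible_mat (subblock E (boff s i) (boff t i + (t i - s i)) (s i) (s i))"
begin

lemma A_stair_entries:
  assumes "i + 1 < k" and "q < t (i + 1)"
  shows "A $$ (boff s i + q, boff t (i + 1) + q) \<noteq> 0"
    and "q' < q \<Longrightarrow> A $$ (boff s i + q, boff t (i + 1) + q') = 0"
proof -
  let ?X = "subblock A (boff s i) (boff t (i + 1)) (t (i + 1)) (t (i + 1))"
  have X: "?X \<in> carrier_mat (t (i + 1)) (t (i + 1))" by (simp add: subblock_def)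
  show "A $$ (boff s i + q, boff t (i + 1) + q) \<noteq> 0"
    using upper_triangular_invertible_diag_nonzero[OF X _ _ assms(2)] A_stair_hat assms(1,2)
    by (simp add: subblock_def)
  show "A $$ (boff s i + q, boff t (i + 1) + q') = 0" if "q' < q"
    using upper_triangularD[of ?X q' q] A_stair_hat assms(1,2) that by (simp add: subblock_def)
qed

lemma E_stair_entries:
  assumes "i < k" and "p < s i"
  shows "E $$ (boff s i + p, boff t i + (t i - s i) + p) \<noteq> 0"
    and "p < p' \<Longrightarrow> p' < s i \<Longrightarrow> E $$ (boff s i + p', boff t i + (t i - s i) + p) = 0"
proof -
  let ?X = "subblock E (boff s i) (boff t i + (t i - s i)) (s i) (s i)"
  have X: "?X \<in> carrier_mat (s i) (s i)" by (simp add: subblock_def)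
  show "E $$ (boff s i + p, boff t i + (t i - s i) + p) \<noteq> 0"
    using upper_triangular_invertible_diag_nonzero[OF X _ _ assms(2)] E_stair_hat assms(1,2)
    by (simp add: subblock_def)
  show "E $$ (boff s i + p', boff t i + (t i - s i) + p) = 0" if "p < p'" "p' < s i"
    using upper_triangularD[of ?X p p'] E_stair_hat assms(1) that by (simp add: subblock_def)
qed

lemma A_pivot_row:
  assumes y: "y < boff t k" and "0 < block_index t y"
  shows "\<exists>\<rho><boff s k. block_index s \<rho> + 1 = block_index t y \<and> A $$ (\<rho>, y) \<noteq> 0 \<and>
           (\<forall>y'<y. A $$ (\<rho>, y') = 0)"
proof -
  obtain j q where j: "j < k" "q < t j" and y_eq: "y = boff t j + q" using boff_decomp[OF y] by blast
  define i where "i = j - 1"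
  have i: "i + 1 = j" "i < k"
    using assms(2) j unfolding y_eq block_index_boff[of q t j, OF j(2)] i_def by auto
  have "q < s i" using st j i by force
  have A_zero: "A $$ (boff s i + q, y') = 0" if y'y: "y' < y" for y'
  proof -
    obtain j' q' where j': "j' < k" "q' < t j'" and y'_eq: "y' = boff t j' + q'"
      using boff_decomp[OF less_trans[OF y'y y]] by blast
    have "j' \<le> j"
      using mono_onD[OF mono_on_block_index[of t k], of y' y] y'y y
      unfolding y_eq y'_eq block_index_boff[of q t j, OF j(2)] block_index_boff[of q' t j', OF j'(2)]
      by simp
    then consider "j' \<le> i" | "j' = j" "q' < q"
      using y'y i unfolding y_eq y'_eq by (cases "j' = j") auto
    then show ?thesis
      using A_lower j' i \<open>q < s i\<close> A_stair_entries(2)[of i q q'] j unfolding y'_eq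
      by cases auto
  qed
  show ?thesis
    using boff_add_less[of i k q s, OF i(2) \<open>q < s i\<close>] block_index_boff[of q s i, OF \<open>q < s i\<close>]
      block_index_boff[of q t j, OF j(2)] i A_zero A_stair_entries(1)[of i q] j
    unfolding y_eq by (intro exI[of _ "boff s i + q"]) auto
qed

lemma E_pivot_column:
  assumes x: "x < boff s k"
  shows "\<exists>c<boff t k. block_index t c = block_index s x \<and> E $$ (x, c) \<noteq> 0 \<and>
           (\<forall>x'<boff s k. x < x' \<longrightarrow> E $$ (x', c) = 0)"
proof -
  obtain i p where i: "i < k" "p < s i" and x_eq: "x = boff s i + p" using boff_decomp[OF x] by blast
  define c where "c = boff t i + (t i - s i + p)"
  have q: "t i - s i + p < t i" using ts i by fastforce
  have E_zero: "E $$ (x', c) = 0" if x': "x' < boff s k" and xx': "x < x'" for x'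
  proof -
    obtain i' p' where i': "i' < k" "p' < s i'" and x'_eq: "x' = boff s i' + p'"
      using boff_decomp[OF x'] by blast
    have "i \<le> i'"
      using mono_onD[OF mono_on_block_index[of s k], of x x'] x' xx'
      unfolding x_eq x'_eq block_index_boff[of p s i, OF i(2)] block_index_boff[of p' s i', OF i'(2)]
      by simp
    then consider "i < i'" | "i' = i" "p < p'" using xx' unfolding x_eq x'_eq by fastforce
    then show ?thesis
      using E_lower i i' q E_stair_entries(2)[of i p p'] unfolding x'_eq c_def
      by cases (auto simp: add.assoc)
  qed
  show ?thesis
    using boff_add_less[of i k _ t, OF i(1) q] block_index_boff[of _ t i, OF q] block_index_boff[of p s i, OF i(2)] E_zero
      E_stair_entries(1)[OF i] unfolding x_eq c_def by (intro exI[of _ c]) (auto simp: c_def add.assoc)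
qed

sublocale staircase_pencil "boff s k" "boff t k" "block_index s" "block_index t" A E
proof
  show "A \<in> carrier_mat (boff s k) (boff t k)" "E \<in> carrier_mat (boff s k) (boff t k)"
    using A_dim E_dim .
  show "mono_on {..<boff s k} (block_index s)" "mono_on {..<boff t k} (block_index t)"
    by (rule mono_on_block_index)+
  show "A $$ (x, y) = 0" if "x < boff s k" "y < boff t k" "block_index t y \<le> block_index s x" for x y
    using boff_decomp[OF that(1)] boff_decomp[OF that(2)] that(3) A_lower
    by (auto simp: block_index_boff)
  show "E $$ (x, y) = 0" if "x < boff s k" "y < boff t k" "block_index t y < block_index s x" for x y
    using boff_decomp[OF that(1)] boff_decomp[OF that(2)] that(3) E_lower
    by (auto simp: block_index_boff)
qed (use A_pivot_row E_pivot_column in auto)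

end

theorem lemma4p1:
  fixes k :: nat and s t :: "nat \<Rightarrow> nat" and A E :: "complex mat"
  assumes k: "k \<ge> 1"
    and ts: "\<forall>i<k. s i \<le> t i"
    and st: "\<forall>i. i + 1 < k \<longrightarrow> t (i + 1) \<le> s i"
    and A_dim: "A \<in> carrier_mat (boff s k) (boff t k)"
    and E_dim: "E \<in> carrier_mat (boff s k) (boff t k)"
    and A_lower: "\<forall>i<k. \<forall>j<k. \<forall>p<s i. \<forall>q<t j. j \<le> i \<longrightarrow>
                    A $$ (boff s i + p, boff t j + q) = 0"
    and E_lower: "\<forall>i<k. \<forall>j<k. \<forall>p<s i. \<forall>q<t j. j < i \<longrightarrow>
                    E $$ (boff s i + p, boff t j + q) = 0"
    and A_stair_zero: "\<forall>i. i + 1 < k \<longrightarrow> (\<forall>p<s i. \<forall>q<t (i + 1). t (i + 1) \<le> p \<longrightarrow>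
                    A $$ (boff s i + p, boff t (i + 1) + q) = 0)"
    and A_stair_hat: "\<forall>i. i + 1 < k \<longrightarrow>
          upper_triangular (subblock A (boff s i) (boff t (i + 1)) (t (i + 1)) (t (i + 1))) \<and>
          invertible_mat (subblock A (boff s i) (boff t (i + 1)) (t (i + 1)) (t (i + 1)))"
    and E_stair_zero: "\<forall>i<k. \<forall>p<s i. \<forall>q<t i - s i. E $$ (boff s i + p, boff t i + q) = 0"
    and E_stair_hat: "\<forall>i<k.
          upper_triangular (subblock E (boff s i) (boff t i + (t i - s i)) (s i) (s i)) \<and>
          invertible_mat (subblock E (boff s i) (boff t i + (t i - s i)) (s i) (s i))"
  shows "\<exists>S Sinv T. S \<in> carrier_mat (boff s k) (boff s k) \<and>
           T \<in> carrier_mat (boff t k) (boff t k) \<and>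
           unit_upper_triangular S \<and> unit_upper_triangular T \<and>
           Sinv \<in> carrier_mat (boff s k) (boff s k) \<and>
           Sinv * S = 1\<^sub>m (boff s k) \<and> S * Sinv = 1\<^sub>m (boff s k) \<and>
           (\<forall>lam::complex. \<forall>i<k. \<forall>j<k. \<forall>p<s i. \<forall>q<t j.
              (Sinv * (A + lam \<cdot>\<^sub>m E) * T) $$ (boff s i + p, boff t j + q) =
                (if j = i + 1 then A $$ (boff s i + p, boff t j + q) else 0)
                + lam * (if j = i then E $$ (boff s i + p, boff t j + q) else 0))"
proof -
  interpret staircase_blocks k s t A E
    using ts st A_dim E_dim A_lower E_lower A_stair_hat E_stair_hat by unfold_locales
  obtain A' E' where "unitriangular_strict_equiv A E A' E'"
    and entries: "\<And>x y. x < boff s k \<Longrightarrow> y < boff t k \<Longrightarrow>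
      A' $$ (x, y) = (if block_index t y = block_index s x + 1 then A $$ (x, y) else 0) \<and>
      E' $$ (x, y) = (if block_index t y = block_index s x then E $$ (x, y) else 0)"
    using bidiagonal_reduction by blast
  then obtain S Sinv T where S: "S \<in> carrier_mat (boff s k) (boff s k)"
    and Sinv: "Sinv \<in> carrier_mat (boff s k) (boff s k)" and T: "T \<in> carrier_mat (boff t k) (boff t k)"
    and unitri: "unit_upper_triangular S" "unit_upper_triangular T"
    and inverse: "Sinv * S = 1\<^sub>m (boff s k)" "S * Sinv = 1\<^sub>m (boff s k)"
    and A': "A' = Sinv * A * T" and E': "E' = Sinv * E * T"
    using A_dim unfolding unitriangular_strict_equiv_def by auto
  have "(Sinv * (A + lam \<cdot>\<^sub>m E) * T) $$ (boff s i + p, boff t j + q) =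
          (if j = i + 1 then A $$ (boff s i + p, boff t j + q) else 0)
          + lam * (if j = i then E $$ (boff s i + p, boff t j + q) else 0)"
    if "i < k" "j < k" "p < s i" "q < t j" for lam i j p q
  proof -
    have x: "boff s i + p < boff s k" and y: "boff t j + q < boff t k"
      using boff_add_less[of i k p s] boff_add_less[of j k q t] that by auto
    show ?thesis
      using entries[OF x y] x y Sinv T that
      by (simp add: mult_pencil_distrib[OF Sinv A_dim E_dim T] A' E' block_index_boff)
  qed
  then show ?thesis using S Sinv T unitri inverse by blast
qed

end
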